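(* Let $k \geq 2$, let $\Delta_k = \{\mathbf{c} \in [0,1]^k : \sum_{i=1}^k c_i = 1\}$, and fix a point $\mathbf{x}$ with conditional class distribution $(p(1|\mathbf{x}),\dots,p(k|\mathbf{x})) \in \Delta_k$ such that $y^* = \arg\max_y p(y|\mathbf{x})$ is unique. Let $q>1$ and consider $$R_{\mathrm{GCE}}(\mathbf{c}) = \sum_{y=1}^k p(y|\mathbf{x})\,\frac{1-c_y^q}{q}, \qquad \mathbf{c} \in \Delta_k.$$ Then the minimizer $f^*_{\mathrm{GCE}}(\mathbf{x})$ of $R_{\mathrm{GCE}}$ over $\Delta_k$ is $\mathbf{e}^{(y^* )}$, where $\mathbf{e}^{(t)}$ denotes the one-hot vector with $\mathbf{e}^{(t)}_j = 1$ iff $j=t$.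
   Context: This is a $k$-class classification setting: a classifier $f$ maps inputs $\mathbf{x}$ to the probability simplex $\Delta_k$, and $p(y|\mathbf{x})$ is the class posterior. The generalized cross entropy loss is $L_{\mathrm{GCE}}(f(\mathbf{x}),y) = \frac{1-f_y(\mathbf{x})^q}{q}$, here used with $q>1$. The optimal classifier $f^*_{\mathrm{GCE}}$ is taken to minimize the pointwise risk $\sum_y L_{\mathrm{GCE}}(f(\mathbf{x}),y)\,p(y|\mathbf{x})$ separately for each $\mathbf{x}$. *)

theory Defs
  imports Complex_Main
begin

text \<open>Classes are the elements of a finite type 'k (k = CARD('k)).
  The probability simplex Delta_k.\<close>
definition simplex :: "('k::finite \<Rightarrow> real) set" where
  "simplex = {c. (\<forall>i. 0 \<le> c i \<and> c i \<le> 1) \<and> (\<Sum>i\<in>UNIV. c i) = 1}"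

definition R_GCE :: "real \<Rightarrow> ('k::finite \<Rightarrow> real) \<Rightarrow> ('k \<Rightarrow> real) \<Rightarrow> real" where
  "R_GCE q p c = (\<Sum>y\<in>UNIV. p y * ((1 - c y powr q) / q))"

definition onehot :: "'k \<Rightarrow> ('k \<Rightarrow> real)" where
  "onehot t = (\<lambda>j. if j = t then 1 else 0)"

end

theory Submission
  imports Defs
begin

text \<open>Since \<open>p\<close> sums to 1, \<open>R_GCE q p c = (1 - gce_score q p c) / q\<close>, so minimizing the risk
  means maximizing the score \<open>\<Sum>\<^sub>y p\<^sub>y c\<^sub>y\<^sup>q\<close>. For \<open>c\<close> in the simplex and \<open>q \<ge> 1\<close> we have
  \<open>c\<^sub>y\<^sup>q \<le> c\<^sub>y\<close>, hence the score is at most the \<open>c\<close>-average of \<open>p\<close>, which is at most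
  \<open>p\<^sub>y\<^sub>*\<close>. The one-hot vector at \<open>y\<^sub>*\<close> attains \<open>p\<^sub>y\<^sub>*\<close>, and because the maximum of \<open>p\<close> is
  strict, an average equal to it forces all mass of \<open>c\<close> onto \<open>y\<^sub>*\<close>.\<close>

definition gce_score :: "real \<Rightarrow> ('k::finite \<Rightarrow> real) \<Rightarrow> ('k \<Rightarrow> real) \<Rightarrow> real" where
  "gce_score q p c = (\<Sum>y\<in>UNIV. p y * c y powr q)"

lemma R_GCE_eq_score: "R_GCE q p c = ((\<Sum>y\<in>UNIV. p y) - gce_score q p c) / q"
  unfolding R_GCE_def gce_score_def
  by (simp add: diff_divide_distrib right_diff_distrib sum_subtractf sum_divide_distrib)

lemma R_GCE_le_iff_score_ge:
  assumes "q > 0"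
  shows "R_GCE q p c \<le> R_GCE q p c' \<longleftrightarrow> gce_score q p c' \<le> gce_score q p c"
  using assms by (simp add: R_GCE_eq_score divide_le_cancel)

lemma onehot_in_simplex: "onehot t \<in> simplex"
  unfolding simplex_def onehot_def by auto

lemma gce_score_onehot: "gce_score q p (onehot t) = p t"
  unfolding gce_score_def
  by (subst sum.cong[OF refl, of _ _ "\<lambda>y. if y = t then p t else 0"]) (auto simp: onehot_def)

lemma powr_le_self: "0 \<le> (x::real) \<Longrightarrow> x \<le> 1 \<Longrightarrow> 1 \<le> q \<Longrightarrow> x powr q \<le> x"
  by (cases "x = 0") (simp_all add: powr_le_one_le)

lemma gce_score_le_average:
  assumes "\<And>y. 0 \<le> p y" and "c \<in> simplex" and "q \<ge> 1"
  shows "gce_score q p c \<le> (\<Sum>y\<in>UNIV. p y * c y)"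
  unfolding gce_score_def
  using assms by (intro sum_mono mult_left_mono powr_le_self) (auto simp: simplex_def)

lemma simplex_average_le_max:
  assumes "c \<in> simplex" and "\<And>y. p y \<le> p t"
  shows "(\<Sum>y\<in>UNIV. p y * c y) \<le> p t"
proof -
  have "(\<Sum>y\<in>UNIV. p y * c y) \<le> (\<Sum>y\<in>UNIV. p t * c y)"
    using assms by (intro sum_mono mult_right_mono) (auto simp: simplex_def)
  also have "\<dots> = p t"
    using assms(1) by (simp add: simplex_def flip: sum_distrib_left)
  finally show ?thesis .
qed

lemma simplex_eq_onehot:
  assumes "c \<in> simplex" and "\<And>y. y \<noteq> t \<Longrightarrow> c y = 0"
  shows "c = onehot t"
proof -
  have "(\<Sum>y\<in>UNIV. c y) = c t"
    using assms(2) by (simp add: sum.remove[of UNIV t] sum.neutral)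
  then have "c t = 1"
    using assms(1) by (simp add: simplex_def)
  then show ?thesis
    using assms(2) by (auto simp: onehot_def)
qed

lemma simplex_average_eq_strict_max_imp_onehot:
  assumes c: "c \<in> simplex" and max: "\<And>y. y \<noteq> t \<Longrightarrow> p y < p t"
    and avg: "(\<Sum>y\<in>UNIV. p y * c y) = p t"
  shows "c = onehot t"
proof (rule simplex_eq_onehot[OF c])
  have nonneg: "0 \<le> (p t - p y) * c y" for y
    using c max[of y] by (cases "y = t") (auto simp: simplex_def)
  have "(\<Sum>y\<in>UNIV. (p t - p y) * c y) = p t * (\<Sum>y\<in>UNIV. c y) - (\<Sum>y\<in>UNIV. p y * c y)"
    by (simp add: left_diff_distrib sum_subtractf sum_distrib_left)
  also have "\<dots> = 0"
    using c avg by (simp add: simplex_def)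
  finally have zero: "(p t - p y) * c y = 0" for y
    using nonneg by (simp add: sum_nonneg_eq_0_iff)
  show "c y = 0" if "y \<noteq> t" for y
    using zero[of y] max[OF that] by simp
qed

theorem gce_score_maximizers:
  assumes nonneg: "\<And>y. 0 \<le> p y" and max: "\<And>y. y \<noteq> t \<Longrightarrow> p y < p t" and "q \<ge> 1"
  shows "{c \<in> simplex. \<forall>c' \<in> simplex. gce_score q p c' \<le> gce_score q p c} = {onehot t}"
proof -
  have max': "p y \<le> p t" for y
    using max by (cases "y = t") (auto intro: less_imp_le)
  have bound: "gce_score q p c \<le> p t" if "c \<in> simplex" for c
    using gce_score_le_average[of p, OF nonneg that \<open>q \<ge> 1\<close>] simplex_average_le_max[of c p t, OF that max']
    by linarith
  have unique: "c = onehot t" if c: "c \<in> simplex" and ge: "p t \<le> gce_score q p c" for c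
  proof (rule simplex_average_eq_strict_max_imp_onehot[of c t p, OF c max])
    show "(\<Sum>y\<in>UNIV. p y * c y) = p t"
      using gce_score_le_average[of p, OF nonneg c \<open>q \<ge> 1\<close>] simplex_average_le_max[of c p t, OF c max'] ge
      by linarith
  qed
  show ?thesis
  proof (intro equalityI subsetI)
    fix c assume "c \<in> {c \<in> simplex. \<forall>c' \<in> simplex. gce_score q p c' \<le> gce_score q p c}"
    then show "c \<in> {onehot t}"
      using unique[of c] onehot_in_simplex[of t] by (auto simp: gce_score_onehot)
  qed (use bound onehot_in_simplex in \<open>auto simp: gce_score_onehot\<close>)
qed

theorem theorem2:
  fixes p :: "'k::finite \<Rightarrow> real" and q :: real and ystar :: 'k
  assumes "card (UNIV :: 'k set) \<ge> 2"
    and "p \<in> simplex"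
    and "\<forall>y. y \<noteq> ystar \<longrightarrow> p y < p ystar"
    and "q > 1"
  shows "{c \<in> simplex. \<forall>c' \<in> simplex. R_GCE q p c \<le> R_GCE q p c'} = {onehot ystar}"
proof -
  have "{c \<in> simplex. \<forall>c' \<in> simplex. R_GCE q p c \<le> R_GCE q p c'}
      = {c \<in> simplex. \<forall>c' \<in> simplex. gce_score q p c' \<le> gce_score q p c}"
    using \<open>q > 1\<close> by (simp add: R_GCE_le_iff_score_ge)
  also have "\<dots> = {onehot ystar}"
    using assms(2-4) by (intro gce_score_maximizers) (auto simp: simplex_def)
  finally show ?thesis .
qed

end
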